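(* Let $\mathcal{A},\mathcal{B}\subseteq\mathcal{P}_\infty(\mathbb{N})$ be hereditary orthogonal families. Assume $\mathcal{A}$ is analytic and not countably generated in $\mathcal{B}^\perp$. Then there is a one-to-one map $\phi:\Sigma\to\mathbb{N}$ such that, with $\mathcal{E}=\{\phi^{-1}(A):A\in\mathcal{A}\}$ and $\mathcal{H}=\{\phi^{-1}(B):B\in\mathcal{B}\}$: (i) for every $\sigma\in[\Sigma]$, the set $\{\sigma|n:n\in\mathbb{N}\}$ belongs to $\mathcal{E}$; (ii) for every $t\in\Sigma$, the set $\{t\cup\{n\}:n\in\mathbb{N},\ t<\{n\}\}$ belongs to $\mathcal{H}$.
   Context: $\Sigma$ is the tree of all strictly increasing finite sequences of natural numbers (ordered by end-extension), each element also viewed as a finite subset of $\mathbb{N}$; for $s,t\in\Sigma$ nonempty, $s<t$ means $\max s<\min t$, and $\varnothing<t$ for all nonempty $t$; $t\cup\{n\}$ with $t<\{n\}$ is the one-point extension. $[\Sigma]$ is the set of infinite strictly increasing sequences $\sigma$, and $\sigma|n$ is its initial segment of length $n$. $\mathcal{P}_\infty(X)$: infinite subsets of $X$ (topology of $2^X$). Hereditary: closed under infinite subsets. Orthogonal: $A\cap B$ finite for all $A\in\mathcal{A}$, $B\in\mathcal{B}$; $\mathcal{B}^\perp$ is the set of infinite sets almost disjoint from every member of $\mathcal{B}$. $\mathcal{A}$ is countably generated in $\mathcal{D}$ if there are $D_n\in\mathcal{D}$ such that each $A\in\mathcal{A}$ has $A\setminus D_n$ finite for some $n$. *)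

theory Defs
  imports "HOL-Analysis.Analysis"
begin

text \<open>Subsets of nat are identified with points of the Cantor space 2^N = nat => bool
  (product topology, bool discrete); Baire space is nat => nat (product topology, nat discrete).\<close>
definition analytic_fam :: "nat set set \<Rightarrow> bool" where
  "analytic_fam \<A> \<longleftrightarrow> \<A> = {} \<or>
     (\<exists>f :: (nat \<Rightarrow> nat) \<Rightarrow> (nat \<Rightarrow> bool).
        continuous_on UNIV f \<and> (\<lambda>x. {n. f x n}) ` UNIV = \<A>)"

definition hereditary :: "nat set set \<Rightarrow> bool" where
  "hereditary \<A> \<longleftrightarrow> (\<forall>A\<in>\<A>. \<forall>C. C \<subseteq> A \<and> infinite C \<longrightarrow> C \<in> \<A>)"

definition orthogonal :: "nat set set \<Rightarrow> nat set set \<Rightarrow> bool" where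
  "orthogonal \<A> \<B> \<longleftrightarrow> (\<forall>A\<in>\<A>. \<forall>B\<in>\<B>. finite (A \<inter> B))"

definition perp :: "nat set set \<Rightarrow> nat set set" where
  "perp \<B> = {C. infinite C \<and> (\<forall>B\<in>\<B>. finite (C \<inter> B))}"

definition countably_generated_in :: "nat set set \<Rightarrow> nat set set \<Rightarrow> bool" where
  "countably_generated_in \<A> \<D> \<longleftrightarrow>
     (\<exists>\<C>. \<C> \<subseteq> \<D> \<and> countable \<C> \<and> (\<forall>A\<in>\<A>. \<exists>D\<in>\<C>. finite (A - D)))"

text \<open>The tree Sigma: strictly increasing finite sequences = finite subsets of nat.\<close>
definition Sigma_tree :: "nat set set" where
  "Sigma_tree = {s. finite s}"

text \<open>Initial segment sigma|n of an infinite strictly increasing sequence.\<close>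
definition restr :: "(nat \<Rightarrow> nat) \<Rightarrow> nat \<Rightarrow> nat set" where
  "restr \<sigma> n = \<sigma> ` {..<n}"

end

theory Submission
  imports Defs "HOL-Library.Nat_Bijection" "HOL-Library.Sublist"
begin

(* Write the analytic family A as the image of a continuous map f from Baire
   space to 2^N, x |-> {n. f x n}.  For a finite sequence l let fam l be the image of the
   basic cylinder of l, and call l bad if fam l is not countably generated in perp B; the
   root [] is bad by hypothesis.  Key lemma: if l is bad, the set of numbers k forced by a
   bad proper extension of l (f x k for every x extending it) meets some member of B in an
   infinite set.  Otherwise that set would be a single generator in perp B, and together with
   the countably many generators of the good extensions of l it would generate fam l.

   The tree Sigma is enumerated via set_encode, where a node has a smaller code than each of
   its children.  By recursion on codes every node s receives a bad sequence label s and a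
   value embed s, increasing in the code: embed s is forced by label s and is a candidate of
   the parent, i.e. lies in the chosen member of B for the parent's label.  Hence the
   immediate successors of a node are mapped into a member of B, and along a branch the
   labels converge to a point x with the branch mapped into {n. f x n}, a member of A.
   Heredity turns both images into the required members. *)

lemma continuous_coordinate_depends_on_prefix:
  fixes f :: "(nat \<Rightarrow> nat) \<Rightarrow> (nat \<Rightarrow> bool)"
  assumes "continuous_on UNIV f" and "f x k"
  shows "\<exists>n. \<forall>y. (\<forall>i<n. y i = x i) \<longrightarrow> f y k"
proof -
  have "continuous_on UNIV (\<lambda>x. f x k)"
    by (rule continuous_on_product_then_coordinatewise[OF assms(1)])
  then have "open ((\<lambda>x. f x k) -` {True})"
    by (metis continuous_on_open_vimage open_UNIV open_discrete Int_UNIV_right)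
  then have "openin (product_topology (\<lambda>i. euclidean) UNIV) ((\<lambda>x. f x k) -` {True})"
    by (simp add: open_fun_def)
  moreover have "x \<in> (\<lambda>x. f x k) -` {True}"
    using assms(2) by simp
  ultimately obtain X where X: "x \<in> (\<Pi>\<^sub>E i\<in>UNIV. X i)" "finite {i. X i \<noteq> UNIV}"
      "(\<Pi>\<^sub>E i\<in>UNIV. X i) \<subseteq> (\<lambda>x. f x k) -` {True}"
    by (force dest: product_topology_open_contains_basis)
  define n where "n = Suc (Max (insert 0 {i. X i \<noteq> UNIV}))"
  have "f y k" if agree: "\<forall>i<n. y i = x i" for y
  proof -
    have "y i \<in> X i" for i
    proof (cases "X i = UNIV")
      case False
      then have "i < n"
        using X(2) by (simp add: n_def le_imp_less_Suc)
      then show ?thesis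
        using agree X(1) by auto
    qed simp
    then show ?thesis
      using X(3) by auto
  qed
  then show ?thesis
    by blast
qed

definition cyl :: "nat list \<Rightarrow> (nat \<Rightarrow> nat) set" where
  "cyl l = {x. \<forall>i<length l. x i = l ! i}"

lemma cyl_map_eq: "x \<in> cyl l \<Longrightarrow> map x [0..<length l] = l"
  by (rule nth_equalityI) (auto simp: cyl_def)

lemma map_in_cyl: "x \<in> cyl (map x [0..<n])"
  by (simp add: cyl_def)

lemma strict_prefix_map:
  assumes "x \<in> cyl l" and "length l < n"
  shows "strict_prefix l (map x [0..<n])"
proof -
  have "map x [0..<n] = l @ map x [length l..<n]"
    using assms upt_add_eq_append[of 0 "length l" "n - length l"]
    by (simp add: cyl_map_eq)
  then show ?thesis
    using assms(2) by (intro strict_prefixI prefixI) auto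
qed

lemma strict_prefix_chain_limit:
  fixes U :: "nat \<Rightarrow> nat list"
  assumes chain: "\<And>n. strict_prefix (U n) (U (Suc n))"
  shows "\<exists>x. \<forall>n. x \<in> cyl (U n)"
proof -
  have long: "n \<le> length (U n)" for n
  proof (induction n)
    case (Suc n) then show ?case
      using prefix_length_less[OF chain[of n]] by simp
  qed simp
  have mono: "prefix (U n) (U m)" if "n \<le> m" for n m
    using that
  proof (induction m rule: dec_induct)
    case (step m) then show ?case
      using chain[of m] by (meson prefix_order.order_trans prefix_order.less_imp_le)
  qed simp
  have nth_stable: "U m ! i = U n ! i" if "n \<le> m" "i < length (U n)" for n m i
    using mono[OF that(1)] that(2) by (auto simp: prefix_def nth_append)
  define x where "x i = U (Suc i) ! i" for i
  have "x \<in> cyl (U n)" for n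
    unfolding cyl_def
  proof (intro CollectI allI impI)
    fix i assume "i < length (U n)"
    then have "U (max n (Suc i)) ! i = U n ! i" "U (max n (Suc i)) ! i = U (Suc i) ! i"
      using nth_stable long[of "Suc i"] by auto
    then show "x i = U n ! i" by (simp add: x_def)
  qed
  then show ?thesis by blast
qed

lemma countably_generated_mono:
  "\<A> \<subseteq> \<A>' \<Longrightarrow> countably_generated_in \<A>' \<D> \<Longrightarrow> countably_generated_in \<A> \<D>"
  unfolding countably_generated_in_def by blast

lemma countably_generated_Un:
  "countably_generated_in \<A> \<D> \<Longrightarrow> countably_generated_in \<A>' \<D> \<Longrightarrow>
     countably_generated_in (\<A> \<union> \<A>') \<D>"
  unfolding countably_generated_in_def by (metis Un_iff countable_Un le_sup_iff)

lemma countably_generated_UN: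
  assumes "countable I" and "\<And>i. i \<in> I \<Longrightarrow> countably_generated_in (F i) \<D>"
  shows "countably_generated_in (\<Union>i\<in>I. F i) \<D>"
proof -
  obtain G where G: "\<And>i. i \<in> I \<Longrightarrow> G i \<subseteq> \<D> \<and> countable (G i) \<and> (\<forall>A\<in>F i. \<exists>D\<in>G i. finite (A - D))"
    using assms(2) unfolding countably_generated_in_def by metis
  show ?thesis
    unfolding countably_generated_in_def
    by (rule exI[of _ "\<Union>i\<in>I. G i"]) (use assms(1) G in \<open>auto intro!: countable_UN; blast\<close>)
qed

lemma hereditary_trace:
  assumes inj: "inj_on \<phi> Sigma_tree" and C: "C \<subseteq> Sigma_tree" "infinite C"
    and "hereditary \<F>" and "X \<in> \<F>" and "\<phi> ` C \<subseteq> X"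
  shows "\<exists>E\<in>\<F>. C = {s\<in>Sigma_tree. \<phi> s \<in> E}"
proof (intro bexI)
  have "inj_on \<phi> C"
    using inj C(1) by (rule inj_on_subset)
  then have "infinite (\<phi> ` C)"
    using C(2) finite_imageD by blast
  then show "\<phi> ` C \<in> \<F>"
    using assms(4-6) unfolding hereditary_def by blast
  show "C = {s\<in>Sigma_tree. \<phi> s \<in> \<phi> ` C}"
    using inj C(1) by (auto simp: inj_on_def)
qed

(* The parent of a nonempty node of Sigma removes its largest element; on codes this is a
   strictly decreasing map, which makes recursion over the tree along codes well-founded. *)
definition parent :: "nat set \<Rightarrow> nat set" where
  "parent s = s - {Max s}"

definition parent_code :: "nat \<Rightarrow> nat" where
  "parent_code c = set_encode (parent (set_decode c))"

lemma set_encode_parent_less: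
  assumes "finite s" and "s \<noteq> {}"
  shows "set_encode (parent s) < set_encode s"
proof -
  have "s = insert (Max s) (parent s)"
    using assms Max_in by (auto simp: parent_def)
  moreover have "set_encode (insert (Max s) (parent s)) = 2 ^ Max s + set_encode (parent s)"
    using assms(1) by (intro set_encode_insert) (auto simp: parent_def)
  ultimately show ?thesis
    by (metis less_add_same_cancel2 zero_less_power zero_less_numeral)
qed

lemma parent_code_less: "0 < c \<Longrightarrow> parent_code c < c"
  using set_encode_parent_less[of "set_decode c"]
  by (metis finite_set_decode neq0_conv parent_code_def set_decode_inverse set_encode_empty)

lemma parent_insert_above:
  assumes "finite t" and "\<forall>m\<in>t. m < n"
  shows "parent (insert n t) = t"
proof -
  have "Max (insert n t) = n"
    using assms by (intro Max_eqI) auto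
  then show ?thesis
    using assms(2) by (auto simp: parent_def)
qed

lemma restr_Suc:
  assumes "strict_mono \<sigma>"
  shows "restr \<sigma> (Suc n) = insert (\<sigma> n) (restr \<sigma> n)" and "\<forall>m\<in>restr \<sigma> n. m < \<sigma> n"
  using assms by (auto simp: restr_def lessThan_Suc strict_mono_less)

lemma restr_inj: "strict_mono \<sigma> \<Longrightarrow> inj (restr \<sigma>)"
  by (rule injI) (metis card_image card_lessThan restr_def strict_mono_imp_inj_on)

locale analytic_pair =
  fixes \<A> \<B> :: "nat set set" and f :: "(nat \<Rightarrow> nat) \<Rightarrow> (nat \<Rightarrow> bool)"
  assumes continuous: "continuous_on UNIV f"
    and image_eq: "(\<lambda>x. {n. f x n}) ` UNIV = \<A>"
    and A_infinite: "\<forall>A\<in>\<A>. infinite A"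
    and A_hereditary: "hereditary \<A>" and B_hereditary: "hereditary \<B>"
    and not_generated: "\<not> countably_generated_in \<A> (perp \<B>)"
begin

definition fam :: "nat list \<Rightarrow> nat set set" where
  "fam l = (\<lambda>x. {n. f x n}) ` cyl l"

definition bad :: "nat list \<Rightarrow> bool" where
  "bad l \<longleftrightarrow> \<not> countably_generated_in (fam l) (perp \<B>)"

definition forces :: "nat list \<Rightarrow> nat \<Rightarrow> bool" where
  "forces l k \<longleftrightarrow> (\<forall>x\<in>cyl l. f x k)"

definition forced_above :: "nat list \<Rightarrow> nat set" where
  "forced_above l = {k. \<exists>l'. strict_prefix l l' \<and> bad l' \<and> forces l' k}"

lemma root_bad: "bad []"
  using image_eq not_generated by (simp add: bad_def fam_def cyl_def)

lemma fam_decomposition: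
  "fam l \<subseteq> (\<Union>g\<in>{g. strict_prefix l g \<and> \<not> bad g}. fam g) \<union> {A\<in>fam l. A \<subseteq> forced_above l}"
proof
  fix A assume "A \<in> fam l"
  then obtain x where x: "x \<in> cyl l" "A = {n. f x n}"
    by (auto simp: fam_def)
  have "A \<in> fam (map x [0..<n])" for n
    using x(2) map_in_cyl by (auto simp: fam_def)
  moreover have "A \<subseteq> forced_above l" if all_bad: "\<forall>n>length l. bad (map x [0..<n])"
  proof
    fix k assume "k \<in> A"
    then obtain n0 where n0: "\<forall>y. (\<forall>i<n0. y i = x i) \<longrightarrow> f y k"
      using continuous_coordinate_depends_on_prefix[OF continuous] x(2) by blast
    define g where "g = map x [0..<max n0 (Suc (length l))]"
    have "forces g k"
      using n0 by (auto simp: forces_def cyl_def g_def)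
    moreover have "strict_prefix l g" "bad g"
      using strict_prefix_map[OF x(1)] all_bad by (auto simp: g_def)
    ultimately show "k \<in> forced_above l"
      by (auto simp: forced_above_def)
  qed
  ultimately show "A \<in> (\<Union>g\<in>{g. strict_prefix l g \<and> \<not> bad g}. fam g) \<union> {A\<in>fam l. A \<subseteq> forced_above l}"
    using \<open>A \<in> fam l\<close> strict_prefix_map[OF x(1)] by blast
qed

lemma forced_above_meets_B:
  assumes "bad l"
  shows "\<exists>B\<in>\<B>. infinite (forced_above l \<inter> B)"
proof (rule ccontr)
  assume "\<not> ?thesis"
  then have almost_disjoint: "\<forall>B\<in>\<B>. finite (forced_above l \<inter> B)"
    by blast
  have "countably_generated_in (\<Union>g\<in>{g. strict_prefix l g \<and> \<not> bad g}. fam g) (perp \<B>)"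
    by (rule countably_generated_UN) (auto simp: bad_def)
  moreover have "countably_generated_in {A\<in>fam l. A \<subseteq> forced_above l} (perp \<B>)"
    unfolding countably_generated_in_def
  proof (cases "finite (forced_above l)")
    case True
    then have "{A\<in>fam l. A \<subseteq> forced_above l} = {}"
      using image_eq A_infinite finite_subset by (fastforce simp: fam_def)
    then show "\<exists>\<C>\<subseteq>perp \<B>. countable \<C> \<and> (\<forall>A\<in>{A\<in>fam l. A \<subseteq> forced_above l}. \<exists>D\<in>\<C>. finite (A - D))"
      by (intro exI[of _ "{}"]) auto
  next
    case False
    then show "\<exists>\<C>\<subseteq>perp \<B>. countable \<C> \<and> (\<forall>A\<in>{A\<in>fam l. A \<subseteq> forced_above l}. \<exists>D\<in>\<C>. finite (A - D))"
      using almost_disjoint by (intro exI[of _ "{forced_above l}"]) (auto simp: perp_def, metis Diff_eq_empty_iff finite.emptyI)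
  qed
  ultimately have "countably_generated_in (fam l) (perp \<B>)"
    using fam_decomposition by (blast intro: countably_generated_mono countably_generated_Un)
  then show False
    using assms by (simp add: bad_def)
qed

definition B_choice :: "nat list \<Rightarrow> nat set" where
  "B_choice u = (SOME B. B \<in> \<B> \<and> infinite (forced_above u \<inter> B))"

definition candidates :: "nat list \<Rightarrow> nat set" where
  "candidates u = forced_above u \<inter> B_choice u"

definition witness :: "nat list \<Rightarrow> nat \<Rightarrow> nat list" where
  "witness u k = (SOME l. strict_prefix u l \<and> bad l \<and> forces l k)"

lemma candidates_infinite:
  assumes "bad u"
  shows "B_choice u \<in> \<B>" and "infinite (candidates u)"
  using someI_ex[OF forced_above_meets_B[OF assms, unfolded Bex_def]]
  by (simp_all add: B_choice_def candidates_def)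

lemma witness_spec:
  assumes "k \<in> candidates u"
  shows "strict_prefix u (witness u k) \<and> bad (witness u k) \<and> forces (witness u k) k"
  unfolding witness_def
  by (rule someI_ex) (use assms in \<open>auto simp: candidates_def forced_above_def\<close>)

function node :: "nat \<Rightarrow> nat \<times> nat list" where
  "node c =
     (let u = (if c = 0 then [] else snd (node (parent_code c)));
          lo = (if c = 0 then 0 else Suc (fst (node (c - 1))));
          k = (LEAST k. k \<in> candidates u \<and> lo \<le> k)
      in (k, witness u k))"
  by auto
termination
  by (relation "Wellfounded.measure id") (auto simp: parent_code_less)

declare node.simps [simp del]

definition parent_label :: "nat \<Rightarrow> nat list" where
  "parent_label c = (if c = 0 then [] else snd (node (parent_code c)))"

definition lower_bound :: "nat \<Rightarrow> nat" where
  "lower_bound c = (if c = 0 then 0 else Suc (fst (node (c - 1))))"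

lemma node_step:
  assumes "bad (parent_label c)"
  shows "fst (node c) \<in> candidates (parent_label c)" "lower_bound c \<le> fst (node c)"
    "strict_prefix (parent_label c) (snd (node c))" "bad (snd (node c))"
    "forces (snd (node c)) (fst (node c))"
proof -
  define k where "k = (LEAST k. k \<in> candidates (parent_label c) \<and> lower_bound c \<le> k)"
  have node_eq: "node c = (k, witness (parent_label c) k)"
    by (subst node.simps) (simp add: k_def parent_label_def lower_bound_def Let_def)
  have "\<exists>k. k \<in> candidates (parent_label c) \<and> lower_bound c \<le> k"
    using candidates_infinite(2)[OF assms] by (auto simp: infinite_nat_iff_unbounded_le)
  then have "k \<in> candidates (parent_label c) \<and> lower_bound c \<le> k"
    unfolding k_def by (rule LeastI_ex)
  then show "fst (node c) \<in> candidates (parent_label c)" "lower_bound c \<le> fst (node c)"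
    "strict_prefix (parent_label c) (snd (node c))" "bad (snd (node c))"
    "forces (snd (node c)) (fst (node c))"
    using witness_spec by (auto simp: node_eq)
qed

(* Invariant: all labels are bad, so every recursion step succeeds. *)
lemma parent_label_bad: "bad (parent_label c)"
proof (induction c rule: less_induct)
  case (less c)
  show ?case
  proof (cases "c = 0")
    case False
    then have "bad (parent_label (parent_code c))"
      using less parent_code_less by simp
    then show ?thesis
      using False node_step(4) by (simp add: parent_label_def)
  qed (simp add: parent_label_def root_bad)
qed

lemma node_value_strict_mono: "strict_mono (\<lambda>c. fst (node c))"
proof (rule strict_monoI_Suc)
  fix c
  show "fst (node c) < fst (node (Suc c))"
    using node_step(2)[OF parent_label_bad, of "Suc c"] by (simp add: lower_bound_def)
qed

definition embed :: "nat set \<Rightarrow> nat" where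
  "embed s = fst (node (set_encode s))"

definition label :: "nat set \<Rightarrow> nat list" where
  "label s = snd (node (set_encode s))"

lemma embed_inj: "inj_on embed Sigma_tree"
proof (rule inj_onI)
  fix s t assume "s \<in> Sigma_tree" "t \<in> Sigma_tree" "embed s = embed t"
  then show "s = t"
    using strict_mono_eq[OF node_value_strict_mono] set_encode_eq
    by (auto simp: embed_def Sigma_tree_def)
qed

lemma label_forces: "forces (label s) (embed s)"
  using node_step(5)[OF parent_label_bad] by (simp add: label_def embed_def)

lemma child_step:
  assumes "finite s" and "s \<noteq> {}"
  shows "embed s \<in> candidates (label (parent s))" and "strict_prefix (label (parent s)) (label s)"
proof -
  have "parent_label (set_encode s) = label (parent s)"
    using set_encode_parent_less[OF assms] assms(1)
    by (simp add: parent_label_def parent_code_def label_def)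
  then show "embed s \<in> candidates (label (parent s))" "strict_prefix (label (parent s)) (label s)"
    using node_step(1,3)[OF parent_label_bad, of "set_encode s"] by (simp_all add: embed_def label_def)
qed

lemma branch_trace:
  assumes \<sigma>: "strict_mono \<sigma>"
  shows "\<exists>A\<in>\<A>. {restr \<sigma> n | n. True} = {s\<in>Sigma_tree. embed s \<in> A}"
proof -
  have restr_parent: "parent (restr \<sigma> (Suc n)) = restr \<sigma> n" for n
    using restr_Suc[OF \<sigma>] parent_insert_above by (simp add: restr_def)
  have "strict_prefix (label (restr \<sigma> n)) (label (restr \<sigma> (Suc n)))" for n
    using child_step(2)[of "restr \<sigma> (Suc n)"] restr_parent[of n] restr_Suc(1)[OF \<sigma>, of n]
    by (simp add: restr_def lessThan_empty_iff)
  then obtain x where x: "\<And>n. x \<in> cyl (label (restr \<sigma> n))"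
    using strict_prefix_chain_limit[of "\<lambda>n. label (restr \<sigma> n)"] by blast
  have "{n. f x n} \<in> \<A>"
    using image_eq by blast
  moreover have "embed ` {restr \<sigma> n | n. True} \<subseteq> {n. f x n}"
    using label_forces x by (auto simp: forces_def)
  moreover have "infinite {restr \<sigma> n | n. True}"
    using range_inj_infinite[OF restr_inj[OF \<sigma>]] by (simp add: full_SetCompr_eq)
  moreover have "{restr \<sigma> n | n. True} \<subseteq> Sigma_tree"
    by (auto simp: Sigma_tree_def restr_def)
  ultimately show ?thesis
    using hereditary_trace[OF embed_inj _ _ A_hereditary] by blast
qed

lemma successor_trace:
  assumes t: "t \<in> Sigma_tree"
  shows "\<exists>B\<in>\<B>. {t \<union> {n} | n. \<forall>m\<in>t. m < n} = {s\<in>Sigma_tree. embed s \<in> B}"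
proof -
  define N where "N = {n. \<forall>m\<in>t. m < n}"
  have successors: "{t \<union> {n} | n. \<forall>m\<in>t. m < n} = (\<lambda>n. insert n t) ` N"
    by (auto simp: N_def)
  have finite_t: "finite t"
    using t by (simp add: Sigma_tree_def)
  have "{Suc (Max (insert 0 t))..} \<subseteq> N"
  proof
    fix n assume "n \<in> {Suc (Max (insert 0 t))..}"
    moreover have "m \<le> Max (insert 0 t)" if "m \<in> t" for m
      using finite_t that by simp
    ultimately show "n \<in> N"
      by (force simp: N_def)
  qed
  then have "infinite N"
    using infinite_Ici finite_subset by blast
  moreover have "inj_on (\<lambda>n. insert n t) N"
    by (rule inj_onI) (auto simp: N_def)
  ultimately have "infinite ((\<lambda>n. insert n t) ` N)"
    using finite_imageD by blast
  moreover have "embed (insert n t) \<in> B_choice (label t)" if "n \<in> N" for n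
    using child_step(1)[of "insert n t"] parent_insert_above[OF finite_t] that finite_t
    by (simp add: N_def candidates_def)
  moreover have "(\<lambda>n. insert n t) ` N \<subseteq> Sigma_tree"
    using finite_t by (auto simp: Sigma_tree_def)
  moreover have "B_choice (label t) \<in> \<B>"
    using candidates_infinite(1)[OF node_step(4)[OF parent_label_bad]] by (simp add: label_def)
  ultimately show ?thesis
    unfolding successors by (intro hereditary_trace[OF embed_inj _ _ B_hereditary]) auto
qed

end

theorem theorem4:
  fixes \<A> \<B> :: "nat set set"
  assumes "\<forall>A\<in>\<A>. infinite A" and "\<forall>B\<in>\<B>. infinite B"
    and "hereditary \<A>" and "hereditary \<B>"
    and "orthogonal \<A> \<B>"
    and "analytic_fam \<A>"
    and "\<not> countably_generated_in \<A> (perp \<B>)"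
  shows "\<exists>\<phi> :: nat set \<Rightarrow> nat. inj_on \<phi> Sigma_tree \<and>
    (\<forall>\<sigma>. strict_mono \<sigma> \<longrightarrow>
        (\<exists>A\<in>\<A>. {restr \<sigma> n | n. True} = {s\<in>Sigma_tree. \<phi> s \<in> A})) \<and>
    (\<forall>t\<in>Sigma_tree.
        (\<exists>B\<in>\<B>. {t \<union> {n} | n. \<forall>m\<in>t. m < n} = {s\<in>Sigma_tree. \<phi> s \<in> B}))"
proof -
  have "\<A> \<noteq> {}"
    using assms(7) unfolding countably_generated_in_def by blast
  then obtain f :: "(nat \<Rightarrow> nat) \<Rightarrow> (nat \<Rightarrow> bool)"
    where "continuous_on UNIV f" and "(\<lambda>x. {n. f x n}) ` UNIV = \<A>"
    using assms(6) by (auto simp: analytic_fam_def)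
  then interpret analytic_pair \<A> \<B> f
    using assms by unfold_locales
  show ?thesis
    using embed_inj branch_trace successor_trace by blast
qed

end
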